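(* Let $0<s<1$. Then $\sigma_{ap}(T_{s^z})\subseteq\{s^w:\mathrm{Re}\,w=\tfrac m2,\ m=-1,0,1,2,\dots\}\cup\{0\}$.
   Context: $\mu$ is the measure on $\Omega=\{\mathrm{Re}\,z\ge-\tfrac12\}$ given by $d\mu=\sum_{n=-1}^\infty \frac{|\Gamma(\frac n2+iy+1)|^2}{2\pi(n+1)!}\,dy\,d\delta_{n/2}(x)$; $H^2(\mu)$ is the closed span of $\{a^z:0<a\le1\}$ in $L^2(\mu)$; $T_{s^z}$ is multiplication by $s^z=e^{z\ln s}$ on $H^2(\mu)$; $\sigma_{ap}$ denotes the approximate point spectrum. *)

theory Defs
  imports "HOL-Analysis.Analysis"
begin

definition cpow :: "real \<Rightarrow> complex \<Rightarrow> complex" where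
  "cpow a z = exp (z * complex_of_real (ln a))"

text \<open>Density on the line Re z = n/2, indexed by m = n + 1 :: nat (so n ranges over -1,0,1,...):
  |Gamma(n/2 + i y + 1)|^2 / (2 pi (n+1)!).\<close>
definition gweight :: "nat \<Rightarrow> real \<Rightarrow> real" where
  "gweight m y = (cmod (Gamma (Complex ((real m + 1) / 2) y)))\<^sup>2 / (2 * pi * fact m)"

text \<open>The measure mu on Omega = {Re z \<ge> -1/2}: sum over n \<ge> -1 of weighted Lebesgue
  measure on the vertical line Re z = n/2.\<close>
definition mu :: "complex measure" where
  "mu = distr (density (count_space UNIV \<Otimes>\<^sub>M lborel) (\<lambda>(m, y). ennreal (gweight m y)))
              borel (\<lambda>(m, y). Complex ((real m - 1) / 2) y)"

definition L2int :: "(complex \<Rightarrow> complex) \<Rightarrow> ennreal" where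
  "L2int f = (\<integral>\<^sup>+ z. ennreal ((cmod (f z))\<^sup>2) \<partial>mu)"

definition L2 :: "(complex \<Rightarrow> complex) set" where
  "L2 = {f. f \<in> borel_measurable mu \<and> L2int f < \<infinity>}"

definition L2norm :: "(complex \<Rightarrow> complex) \<Rightarrow> real" where
  "L2norm f = sqrt (enn2real (L2int f))"

definition span_pow :: "(complex \<Rightarrow> complex) set" where
  "span_pow = {g. \<exists>A c. finite A \<and> A \<subseteq> {0<..1} \<and>
                     g = (\<lambda>z. \<Sum>a\<in>A. c a * cpow a z)}"

definition H2 :: "(complex \<Rightarrow> complex) set" where
  "H2 = {f \<in> L2. \<exists>g. (\<forall>k. g k \<in> span_pow) \<and>
                    (\<lambda>k. L2norm (\<lambda>z. f z - g k z)) \<longlonglongrightarrow> 0}"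

definition T_mult :: "real \<Rightarrow> (complex \<Rightarrow> complex) \<Rightarrow> (complex \<Rightarrow> complex)" where
  "T_mult s f = (\<lambda>z. cpow s z * f z)"

definition approx_point_spectrum ::
  "((complex \<Rightarrow> complex) \<Rightarrow> (complex \<Rightarrow> complex)) \<Rightarrow> complex set" where
  "approx_point_spectrum T = {c. \<exists>f. (\<forall>k. f k \<in> H2 \<and> L2norm (f k) = 1) \<and>
       (\<lambda>k. L2norm (\<lambda>z. T (f k) z - c * f k z)) \<longlonglongrightarrow> 0}"

end

theory Submission
  imports Defs
begin

(*
  The measure mu lives on the vertical lines Re z = (m - 1)/2, m = 0,1,2,...;
  on such a line the multiplier s^z has constant modulus s powr ((m - 1)/2), and these moduli
  tend to 0 because 0 < s < 1.  If c is nonzero and not of the form s^w with Re w on one of the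
  lines, then |c| differs from every one of these moduli; since they accumulate only at 0, |c|
  keeps a uniform distance d > 0 from all of them.  Hence |s^z - c| >= d on the support of mu,
  so ||(T - c) f|| >= d ||f|| for all f in H^2, and c cannot be in the approximate point spectrum.
*)

definition line_point :: "nat \<times> real \<Rightarrow> complex" where
  "line_point = (\<lambda>(m, y). Complex ((real m - 1) / 2) y)"

definition line_measure :: "(nat \<times> real) measure" where
  "line_measure = density (count_space UNIV \<Otimes>\<^sub>M lborel) (\<lambda>(m, y). ennreal (gweight m y))"

lemma measurable_line_point: "line_point \<in> measurable line_measure borel"
proof -
  have coords: "line_point = (\<lambda>x. of_real ((real (fst x) - 1) / 2) + \<i> * of_real (snd x))"
    by (auto simp: line_point_def complex_eq_iff)
  show ?thesis
    unfolding coords line_measure_def by (simp add: measurable_density_eq1) measurable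
qed

lemma mu_distr: "mu = distr line_measure borel line_point"
  unfolding mu_def line_measure_def line_point_def by simp

lemma H2_borel_measurable: "f \<in> H2 \<Longrightarrow> f \<in> borel_measurable borel"
  using measurable_cong_sets[of mu borel borel borel] unfolding H2_def L2_def
  by (simp add: mu_distr)

lemma H2_L2int_finite: "f \<in> H2 \<Longrightarrow> L2int f < \<infinity>"
  unfolding H2_def L2_def by simp

lemma L2int_lines:
  assumes "f \<in> borel_measurable borel"
  shows "L2int f = (\<integral>\<^sup>+x. ennreal ((cmod (f (line_point x)))\<^sup>2) \<partial>line_measure)"
  unfolding L2int_def mu_distr using assms
  by (intro nn_integral_distr measurable_line_point) measurable

lemma L2int_weighted_mono:
  assumes f: "f \<in> borel_measurable borel" and g: "g \<in> borel_measurable borel"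
    and "a \<ge> 0" "b \<ge> 0"
    and le: "\<And>x. a * (cmod (f (line_point x)))\<^sup>2 \<le> b * (cmod (g (line_point x)))\<^sup>2"
  shows "ennreal a * L2int f \<le> ennreal b * L2int g"
proof -
  have meas: "(\<lambda>x. ennreal ((cmod (h (line_point x)))\<^sup>2)) \<in> borel_measurable line_measure"
    if "h \<in> borel_measurable borel" for h :: "complex \<Rightarrow> complex"
    using measurable_comp[OF measurable_line_point that] by (simp add: o_def)
  have "ennreal a * L2int f = (\<integral>\<^sup>+x. ennreal (a * (cmod (f (line_point x)))\<^sup>2) \<partial>line_measure)"
    using \<open>a \<ge> 0\<close> by (simp add: L2int_lines[OF f] nn_integral_cmult[OF meas[OF f]] ennreal_mult)
  also have "\<dots> \<le> (\<integral>\<^sup>+x. ennreal (b * (cmod (g (line_point x)))\<^sup>2) \<partial>line_measure)"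
    by (intro nn_integral_mono ennreal_leI le)
  also have "\<dots> = ennreal b * L2int g"
    using \<open>b \<ge> 0\<close> by (simp add: L2int_lines[OF g] nn_integral_cmult[OF meas[OF g]] ennreal_mult)
  finally show ?thesis .
qed

lemma L2norm_multiplier_lower_bound:
  assumes f: "f \<in> borel_measurable borel" and h: "h \<in> borel_measurable borel"
    and fin: "L2int f < \<infinity>" and "0 \<le> d"
    and lower: "\<And>x. d \<le> cmod (h (line_point x))"
    and upper: "\<And>x. cmod (h (line_point x)) \<le> C"
  shows "d * L2norm f \<le> L2norm (\<lambda>z. h z * f z)"
proof -
  have hf: "(\<lambda>z. h z * f z) \<in> borel_measurable borel" using f h by measurable
  have "0 \<le> C" using \<open>0 \<le> d\<close> lower upper by (meson order_trans)
  obtain r where r: "L2int f = ennreal r" "0 \<le> r"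
    using fin by (cases "L2int f") auto
  have "ennreal 1 * L2int (\<lambda>z. h z * f z) \<le> ennreal (C\<^sup>2) * L2int f"
  proof (rule L2int_weighted_mono[OF hf f])
    fix x show "1 * (cmod (h (line_point x) * f (line_point x)))\<^sup>2 \<le> C\<^sup>2 * (cmod (f (line_point x)))\<^sup>2"
      using upper[of x] by (simp add: norm_mult power_mult_distrib mult_right_mono power_mono)
  qed simp_all
  then obtain q where q: "L2int (\<lambda>z. h z * f z) = ennreal q" "0 \<le> q"
    using r by (cases "L2int (\<lambda>z. h z * f z)") (auto simp: ennreal_mult[symmetric] top_unique)
  have "ennreal (d\<^sup>2) * L2int f \<le> ennreal 1 * L2int (\<lambda>z. h z * f z)"
  proof (rule L2int_weighted_mono[OF f hf])
    fix x show "d\<^sup>2 * (cmod (f (line_point x)))\<^sup>2 \<le> 1 * (cmod (h (line_point x) * f (line_point x)))\<^sup>2"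
      using lower[of x] \<open>0 \<le> d\<close> by (simp add: norm_mult power_mult_distrib mult_right_mono power_mono)
  qed simp_all
  then have "d\<^sup>2 * r \<le> q" using r q by (simp add: ennreal_mult[symmetric])
  then have "sqrt (d\<^sup>2 * r) \<le> sqrt q" by (rule real_sqrt_le_mono)
  then show ?thesis using r q \<open>0 \<le> d\<close> by (simp add: L2norm_def real_sqrt_mult)
qed

lemma not_approx_eigenvalue_multiplier:
  assumes h: "h \<in> borel_measurable borel" and "0 < d"
    and lower: "\<And>x. d \<le> cmod (h (line_point x) - c)"
    and upper: "\<And>x. cmod (h (line_point x) - c) \<le> C"
  shows "c \<notin> approx_point_spectrum (\<lambda>f z. h z * f z)"
proof
  assume "c \<in> approx_point_spectrum (\<lambda>f z. h z * f z)"
  then obtain f where f: "\<And>k. f k \<in> H2" "\<And>k. L2norm (f k) = 1"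
    and lim: "(\<lambda>k. L2norm (\<lambda>z. h z * f k z - c * f k z)) \<longlonglongrightarrow> 0"
    unfolding approx_point_spectrum_def by blast
  have "d \<le> L2norm (\<lambda>z. h z * f k z - c * f k z)" for k
  proof -
    have "d * L2norm (f k) \<le> L2norm (\<lambda>z. (h z - c) * f k z)"
      using h lower upper \<open>0 < d\<close> H2_borel_measurable[OF f(1)] H2_L2int_finite[OF f(1)]
      by (intro L2norm_multiplier_lower_bound) auto
    then show ?thesis using f(2) by (simp add: left_diff_distrib)
  qed
  then have "d \<le> 0" using lim by (intro LIMSEQ_le_const) auto
  with \<open>0 < d\<close> show False by simp
qed

lemma cmod_cpow_line_point:
  assumes "0 < s"
  shows "cmod (cpow s (line_point x)) = s powr ((real (fst x) - 1) / 2)"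
  using assms by (cases x) (simp add: cpow_def line_point_def powr_def mult.commute)

text \<open>Every complex number whose modulus is s powr ((m - 1)/2) is a value of s^w with w on the
  m-th line; this is where s \<noteq> 1 is needed, to choose Im w.\<close>
lemma cpow_onto_line_circle:
  assumes "0 < s" "s \<noteq> 1" and c: "cmod c = s powr ((real m - 1) / 2)"
  shows "c \<in> {cpow s w | w. \<exists>m::int. m \<ge> -1 \<and> Re w = real_of_int m / 2}"
proof -
  define w where "w = Complex ((real m - 1) / 2) (Arg c / ln s)"
  have "ln s \<noteq> 0" using assms by simp
  then have "w * of_real (ln s) = Complex ((real m - 1) / 2 * ln s) (Arg c)"
    by (simp add: w_def complex_eq_iff)
  then have "cpow s w = of_real (s powr ((real m - 1) / 2)) * cis (Arg c)"
    using \<open>0 < s\<close> by (simp add: cpow_def exp_eq_polar powr_def mult.commute)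
  also have "\<dots> = c" using c rcis_cmod_Arg[of c] by (simp add: rcis_def)
  finally have "cpow s w = c" .
  moreover have "Re w = real_of_int (int m - 1) / 2" by (simp add: w_def)
  ultimately show ?thesis by (intro CollectI exI[of _ w] conjI exI[of _ "int m - 1"]) auto
qed

text \<open>For 0 < s < 1 the moduli on the lines tend to 0 (geometrically, with ratio sqrt s).\<close>
lemma line_moduli_tendsto_zero:
  assumes "0 < s" "s < 1"
  shows "(\<lambda>m::nat. s powr ((real m - 1) / 2)) \<longlonglongrightarrow> 0"
proof -
  have geometric: "s powr ((real m - 1) / 2) = s powr (-1/2) * (s powr (1/2)) ^ m" for m
    using \<open>0 < s\<close> by (simp add: powr_realpow[symmetric] powr_powr powr_add[symmetric] diff_divide_distrib)
  have "s powr (1/2) < 1" using assms powr_less_mono2[of "1/2" s 1] by simp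
  then have "(\<lambda>m. s powr (-1/2) * (s powr (1/2)) ^ m) \<longlonglongrightarrow> s powr (-1/2) * 0"
    by (intro tendsto_intros) simp
  then show ?thesis by (simp add: geometric)
qed

lemma null_sequence_separated:
  fixes a :: "nat \<Rightarrow> real"
  assumes "a \<longlonglongrightarrow> 0" "0 < r" and avoid: "\<And>m. a m \<noteq> r"
  shows "\<exists>d>0. \<forall>m. d \<le> \<bar>a m - r\<bar>"
proof -
  obtain N where N: "\<And>m. m \<ge> N \<Longrightarrow> \<bar>a m\<bar> < r / 2"
    using assms(1,2) unfolding LIMSEQ_def dist_real_def by (metis diff_zero half_gt_zero)
  define d where "d = Min (insert (r / 2) ((\<lambda>m. \<bar>a m - r\<bar>) ` {..<N}))"
  have "0 < d" unfolding d_def using \<open>0 < r\<close> avoid by auto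
  moreover have "d \<le> \<bar>a m - r\<bar>" for m
  proof (cases "m < N")
    case True then show ?thesis unfolding d_def by (intro Min_le) auto
  next
    case False
    then have "d \<le> r / 2" unfolding d_def by (intro Min_le) auto
    then show ?thesis using N[of m] False by auto
  qed
  ultimately show ?thesis by blast
qed

theorem mainTheorem5:
  fixes s :: real
  assumes "0 < s" and "s < 1"
  shows "approx_point_spectrum (T_mult s) \<subseteq>
           {cpow s w | w. \<exists>m::int. m \<ge> -1 \<and> Re w = real_of_int m / 2} \<union> {0}"
proof
  fix c assume c: "c \<in> approx_point_spectrum (T_mult s)"
  show "c \<in> {cpow s w | w. \<exists>m::int. m \<ge> -1 \<and> Re w = real_of_int m / 2} \<union> {0}"
  proof (rule ccontr)
    assume outside: "c \<notin> {cpow s w | w. \<exists>m::int. m \<ge> -1 \<and> Re w = real_of_int m / 2} \<union> {0}"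
    have "s powr ((real m - 1) / 2) \<noteq> cmod c" for m
      using outside cpow_onto_line_circle[of s c m] assms by auto
    moreover have "0 < cmod c" using outside by auto
    ultimately obtain d where "0 < d" and gap: "\<And>m. d \<le> \<bar>s powr ((real m - 1) / 2) - cmod c\<bar>"
      using null_sequence_separated[OF line_moduli_tendsto_zero[OF assms]] by blast
    have lower: "d \<le> cmod (cpow s (line_point x) - c)" for x
      using gap[of "fst x"] norm_triangle_ineq3[of "cpow s (line_point x)" c]
      by (simp add: cmod_cpow_line_point[OF \<open>0 < s\<close>])
    have upper: "cmod (cpow s (line_point x) - c) \<le> s powr (-1/2) + cmod c" for x
      using norm_triangle_ineq4[of "cpow s (line_point x)" c]
        powr_mono'[of "-1/2" "(real (fst x) - 1) / 2" s] assms
      by (simp add: cmod_cpow_line_point[OF \<open>0 < s\<close>])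
    have "cpow s \<in> borel_measurable borel" unfolding cpow_def by measurable
    then have "c \<notin> approx_point_spectrum (\<lambda>f z. cpow s z * f z)"
      using \<open>0 < d\<close> lower upper by (rule not_approx_eigenvalue_multiplier)
    then show False using c by (simp add: T_mult_def[abs_def])
  qed
qed

end
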